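(* For every $u\in S_n$ and every $J\subseteq[n]$, \[ \mathrm{wt}(\Delta_J u)=t^{\mathrm{des}(u)}q^{\mathrm{maj}(u)}\prod_{j\in J\,\triangle\,\mathrm{Des}(u)} tq^j,\] where $J\triangle\mathrm{Des}(u)=(J\cup\mathrm{Des}(u))\setminus(J\cap\mathrm{Des}(u))$ is the symmetric difference.
   Context: $S_n$ is the set of permutations of $[n]=\{1,\dots,n\}$, written as words $u=u_1\cdots u_n$, and regarded as elements of $B_n$ with all letters positive. $B_n$ is the set of signed permutations: words $w=w_1\cdots w_n$ on the alphabet $\{\bar 1,1,\dots,\bar n,n\}$ (where $\bar i=-i$, $\bar{\bar i}=i$) such that $|w_1|\cdots|w_n|$ is a permutation in $S_n$. The alphabet is totally ordered by $\bar 1<\bar 2<\cdots<\bar n<1<2<\cdots<n$. For a word $w$ over a totally ordered alphabet, $\mathrm{Des}(w)=\{i: w_i>w_{i+1}\}$, $\mathrm{des}(w)=|\mathrm{Des}(w)|$, and $\mathrm{maj}(w)=\sum_{i\in\mathrm{Des}(w)} i$. For $w\in B_n$: $\mathrm{fdes}(w)=2\,\mathrm{des}(w)+1$ if $w_1<0$ and $\mathrm{fdes}(w)=2\,\mathrm{des}(w)$ if $w_1>0$; $\mathrm{fmaj}(w)=2\,\mathrm{maj}(w)+|\{i:w_i<0\}|$; $\mathrm{wt}(w)=t^{\mathrm{fdes}(w)}q^{\mathrm{fmaj}(w)}$. For $1\le i\le n$, $\Delta_i w=\overline{w_1}\cdots\overline{w_i}\,w_{i+1}\cdots w_n$ (negate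 the first $i$ letters). These operators commute, and for $J=\{j_1<\cdots<j_k\}\subseteq[n]$, $\Delta_J=\Delta_{j_1}\cdots\Delta_{j_k}$ ($\Delta_\emptyset$ is the identity). *)

theory Defs
  imports Main
begin

text \<open>Words are int lists; the letter \<open>-i\<close> stands for \<open>bar i\<close>.
  Positions are 1-indexed: \<open>w_i = w ! (i - 1)\<close>.\<close>

definition perms :: "nat \<Rightarrow> int list set" where
  "perms n = {u. length u = n \<and> distinct u \<and> set u = int ` {1..n}}"

definition sless :: "int \<Rightarrow> int \<Rightarrow> bool" where
  "sless a b \<longleftrightarrow> (a < 0 \<and> b > 0) \<or> (a < 0 \<and> b < 0 \<and> - a < - b) \<or> (a > 0 \<and> b > 0 \<and> a < b)"

definition Des :: "int list \<Rightarrow> nat set" where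
  "Des w = {i. 1 \<le> i \<and> i < length w \<and> sless (w ! i) (w ! (i - 1))}"

definition des :: "int list \<Rightarrow> nat" where
  "des w = card (Des w)"

definition maj :: "int list \<Rightarrow> nat" where
  "maj w = (\<Sum>i\<in>Des w. i)"

definition negs :: "int list \<Rightarrow> nat" where
  "negs w = card {i. 1 \<le> i \<and> i \<le> length w \<and> w ! (i - 1) < 0}"

definition fdes :: "int list \<Rightarrow> nat" where
  "fdes w = (if w \<noteq> [] \<and> hd w < 0 then 2 * des w + 1 else 2 * des w)"

definition fmaj :: "int list \<Rightarrow> nat" where
  "fmaj w = 2 * maj w + negs w"

definition wt :: "'a::comm_ring_1 \<Rightarrow> 'a \<Rightarrow> int list \<Rightarrow> 'a" where
  "wt t q w = t ^ fdes w * q ^ fmaj w"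

definition Delta :: "nat \<Rightarrow> int list \<Rightarrow> int list" where
  "Delta i w = map (\<lambda>x. - x) (take i w) @ drop i w"

text \<open>\<open>Delta_J = Delta_{j1} \<circ> ... \<circ> Delta_{jk}\<close> for \<open>J = {j1 < ... < jk}\<close>.\<close>
definition DeltaSet :: "nat set \<Rightarrow> int list \<Rightarrow> int list" where
  "DeltaSet J w = foldr Delta (sorted_list_of_set J) w"

end

theory Submission
  imports Defs
begin

text \<open>
  For \<open>J \<subseteq> [n]\<close> let \<open>above J p = |{j \<in> J. p \<le> j}|\<close>.  The letter in position
  \<open>p\<close> of \<open>\<Delta>\<^sub>J w\<close> is negated exactly when \<open>above J p\<close> is odd, since it is touched by the
  operators \<open>\<Delta>\<^sub>j\<close> with \<open>j \<ge> p\<close>.  For a word \<open>u\<close> with positive letters this gives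
    \<^item> \<open>Des (\<Delta>\<^sub>J u) = (Des u - J) \<union> E\<close>, where \<open>E = {j \<in> J. above J j even}\<close>: outside \<open>J\<close> two
      neighbouring letters carry the same sign, at \<open>j \<in> J\<close> exactly one of them is negated;
    \<^item> the first letter is negative iff \<open>|J|\<close> is odd, and the number of negative letters
      is the number of positions \<open>p \<ge> 1\<close> with \<open>above J p\<close> odd.
  Two counting identities for finite sets of naturals, proved by induction inserting
  minimal elements, finish the computation: \<open>|E| = |J| div 2\<close> and
  \<open>\<Sum>J = 2 \<Sum>E + |{p \<ge> 1. above J p odd}|\<close>.  Hence \<open>fdes (\<Delta>\<^sub>J u) = des u + |J \<triangle> Des u|\<close>
  and \<open>fmaj (\<Delta>\<^sub>J u) = maj u + \<Sum>(J \<triangle> Des u)\<close> by elementary symmetric-difference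
  arithmetic, and \<open>lemma9\<close> follows by factoring the weight.
\<close>

section \<open>Counting the elements of a set above a position\<close>

definition above :: "nat set \<Rightarrow> nat \<Rightarrow> nat" where
  "above J p = card {j\<in>J. p \<le> j}"

text \<open>The elements of \<open>J\<close> with an even number of elements of \<open>J\<close> at or above them
  (for \<open>J = {j\<^sub>1 < \<dots> < j\<^sub>k}\<close> these are \<open>j\<^sub>k\<^sub>-\<^sub>1, j\<^sub>k\<^sub>-\<^sub>3, \<dots>\<close>), and the positions
  \<open>p \<ge> 1\<close> with an odd number of them.\<close>
definition even_marks :: "nat set \<Rightarrow> nat set" where
  "even_marks J = {j\<in>J. even (above J j)}"

definition odd_positions :: "nat set \<Rightarrow> nat set" where
  "odd_positions J = {p. 1 \<le> p \<and> odd (above J p)}"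

lemma above_step:
  assumes "finite J"
  shows "above J i = (if i \<in> J then Suc (above J (Suc i)) else above J (Suc i))"
proof -
  have "{j\<in>J. i \<le> j} = (if i \<in> J then insert i {j\<in>J. Suc i \<le> j} else {j\<in>J. Suc i \<le> j})"
    by (auto simp: Suc_le_eq le_less)
  then show ?thesis unfolding above_def using assms by auto
qed

lemma above_beyond: "J \<subseteq> {1..n} \<Longrightarrow> n < p \<Longrightarrow> above J p = 0"
  unfolding above_def by (auto simp: card_eq_0_iff)

lemma above_below_min: "\<forall>a\<in>A. m < a \<Longrightarrow> p \<le> m \<Longrightarrow> above A p = card A"
  unfolding above_def by (rule arg_cong[where f = card]) fastforce

lemma above_insert_min:
  assumes "finite A" and "\<forall>a\<in>A. m < a"
  shows "above (insert m A) p = (if p \<le> m then Suc (card A) else above A p)"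
proof (cases "p \<le> m")
  case True
  then have "{j \<in> insert m A. p \<le> j} = insert m A" using assms(2) by fastforce
  moreover have "m \<notin> A" using assms(2) by auto
  ultimately show ?thesis using True assms(1) unfolding above_def by simp
next
  case False
  then have "{j \<in> insert m A. p \<le> j} = {j\<in>A. p \<le> j}" by auto
  then show ?thesis using False unfolding above_def by simp
qed

lemma even_marks_insert_min:
  assumes "finite A" and "\<forall>a\<in>A. m < a"
  shows "even_marks (insert m A) =
    (if even (Suc (card A)) then insert m (even_marks A) else even_marks A)"
  using assms by (auto simp: even_marks_def above_insert_min)

lemma finite_even_marks: "finite J \<Longrightarrow> finite (even_marks J)"
  unfolding even_marks_def by simp

text \<open>Positions with an odd count lie below \<open>max J\<close>.\<close>
lemma finite_odd_count: "finite A \<Longrightarrow> finite {p. P p \<and> odd (above A p)}"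
proof (rule finite_subset)
  show "{p. P p \<and> odd (above A p)} \<subseteq> (\<Union>a\<in>A. {..a})"
  proof
    fix p assume "p \<in> {p. P p \<and> odd (above A p)}"
    then have "{j\<in>A. p \<le> j} \<noteq> {}"
      unfolding above_def by (metis (mono_tags) card.empty even_zero mem_Collect_eq)
    then show "p \<in> (\<Union>a\<in>A. {..a})" by auto
  qed
qed simp

lemma card_even_marks: "finite J \<Longrightarrow> card (even_marks J) = card J div 2"
proof (induction J rule: finite_linorder_min_induct)
  case (insert m A)
  then have "m \<notin> A" "m \<notin> even_marks A" by (auto simp: even_marks_def)
  with insert show ?case
    by (simp add: even_marks_insert_min finite_even_marks)
qed (simp add: even_marks_def)

text \<open>When a new minimum \<open>m\<close> is inserted, the odd positions above \<open>m\<close>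
  are unchanged, while the positions \<open>1..m\<close> switch from odd to even or back; this
  is balanced by \<open>m\<close> entering \<open>even_marks\<close> exactly when \<open>|A|\<close> is odd.\<close>
lemma sum_even_marks: "finite J \<Longrightarrow> \<Sum>J = 2 * \<Sum>(even_marks J) + card (odd_positions J)"
proof (induction J rule: finite_linorder_min_induct)
  case empty
  then show ?case by (simp add: even_marks_def odd_positions_def above_def)
next
  case (insert m A)
  define R where "R = {p. m < p \<and> odd (above A p)}"
  have "finite R" unfolding R_def using finite_odd_count[OF insert(1)] .
  have card_low: "card ({p. 1 \<le> p \<and> p \<le> m \<and> b} \<union> R) = (if b then m else 0) + card R" for b
  proof -
    have "{p. 1 \<le> p \<and> p \<le> m \<and> b} = (if b then {1..m} else {})" by auto
    moreover have "{1..m} \<inter> R = {}" unfolding R_def by auto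
    ultimately show ?thesis using \<open>finite R\<close> by (simp add: card_Un_disjoint)
  qed
  have odd_new: "odd_positions (insert m A) = {p. 1 \<le> p \<and> p \<le> m \<and> odd (Suc (card A))} \<union> R"
    unfolding R_def odd_positions_def using insert by (auto simp: above_insert_min)
  have new: "card (odd_positions (insert m A)) = (if odd (Suc (card A)) then m else 0) + card R"
    unfolding odd_new by (rule card_low)
  have odd_old: "odd_positions A = {p. 1 \<le> p \<and> p \<le> m \<and> odd (card A)} \<union> R"
    unfolding R_def odd_positions_def using insert above_below_min[of A m] by auto
  have old: "card (odd_positions A) = (if odd (card A) then m else 0) + card R"
    unfolding odd_old by (rule card_low)
  have "m \<notin> A" "m \<notin> even_marks A" using insert by (auto simp: even_marks_def)
  then have "\<Sum>(insert m A) = m + \<Sum>A"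
    and "\<Sum>(even_marks (insert m A)) = (if odd (card A) then m else 0) + \<Sum>(even_marks A)"
    using insert by (simp_all add: even_marks_insert_min finite_even_marks)
  then show ?case using insert.IH new old by simp
qed

section \<open>Letters of \<open>\<Delta>\<^sub>J w\<close>\<close>

lemma length_Delta [simp]: "length (Delta i w) = length w"
  unfolding Delta_def by simp

lemma nth_Delta: "k < length w \<Longrightarrow> Delta i w ! k = (if k < i then - (w ! k) else w ! k)"
  unfolding Delta_def by (auto simp: nth_append min_def)

lemma length_foldr_Delta [simp]: "length (foldr Delta xs w) = length w"
  by (induction xs) auto

lemma nth_foldr_Delta: "k < length w \<Longrightarrow>
  foldr Delta xs w ! k = (if odd (length (filter (\<lambda>j. k < j) xs)) then - (w ! k) else w ! k)"
  by (induction xs) (auto simp: nth_Delta)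

lemma length_DeltaSet [simp]: "length (DeltaSet J w) = length w"
  unfolding DeltaSet_def by simp

text \<open>Position \<open>k + 1\<close> (list index \<open>k\<close>) is negated iff \<open>above J (k + 1)\<close> is odd.\<close>
lemma nth_DeltaSet:
  assumes "finite J" and "k < length w"
  shows "DeltaSet J w ! k = (if odd (above J (Suc k)) then - (w ! k) else w ! k)"
proof -
  have "length (filter (\<lambda>j. k < j) (sorted_list_of_set J)) = above J (Suc k)"
    unfolding above_def using assms(1)
    by (subst distinct_length_filter) (auto intro: arg_cong[where f = card])
  then show ?thesis unfolding DeltaSet_def using nth_foldr_Delta[OF assms(2)] by simp
qed

lemma perms_positive: "u \<in> perms n \<Longrightarrow> length u = n \<and> (\<forall>x\<in>set u. 0 < x)"
  unfolding perms_def by auto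

text \<open>Descents of \<open>\<Delta>\<^sub>J u\<close>: at \<open>i \<notin> J\<close> both neighbours carry the same sign and the
  comparison is as in \<open>u\<close>; at \<open>i \<in> J\<close> exactly one of them is negated, and it is a descent
  iff the negated letter is the right one, i.e. \<open>above J i\<close> is even.\<close>
lemma Des_DeltaSet:
  assumes pos: "\<forall>x\<in>set u. 0 < x" and J: "J \<subseteq> {1..length u}"
  shows "Des (DeltaSet J u) = (Des u - J) \<union> even_marks J"
proof (rule set_eqI)
  fix i
  let ?w = "DeltaSet J u"
  have fJ: "finite J" using J finite_subset by blast
  show "i \<in> Des ?w \<longleftrightarrow> i \<in> (Des u - J) \<union> even_marks J"
  proof (cases "1 \<le> i \<and> i < length u")
    case True
    have w_i: "?w ! i = (if odd (above J (Suc i)) then - (u ! i) else u ! i)"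
      and w_pred: "?w ! (i - 1) = (if odd (above J i) then - (u ! (i - 1)) else u ! (i - 1))"
      using nth_DeltaSet[OF fJ, of i u] nth_DeltaSet[OF fJ, of "i - 1" u] True by auto
    have "0 < u ! i" "0 < u ! (i - 1)" using pos True by auto
    then have "sless (?w ! i) (?w ! (i - 1)) \<longleftrightarrow>
        (if i \<in> J then even (above J i) else sless (u ! i) (u ! (i - 1)))"
      unfolding w_i w_pred above_step[OF fJ, of i] sless_def by auto
    then show ?thesis using True by (auto simp: Des_def even_marks_def)
  next
    case False
    then have "i \<notin> J \<or> i = length u" using J by auto
    moreover have "length u \<in> J \<Longrightarrow> odd (above J (length u))"
      using above_step[OF fJ, of "length u"] above_beyond[OF J, of "Suc (length u)"] by simp
    ultimately show ?thesis using False by (auto simp: Des_def even_marks_def)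
  qed
qed

lemma negs_DeltaSet:
  assumes pos: "\<forall>x\<in>set u. 0 < x" and J: "J \<subseteq> {1..length u}"
  shows "negs (DeltaSet J u) = card (odd_positions J)"
proof -
  have fJ: "finite J" using J finite_subset by blast
  have "{i. 1 \<le> i \<and> i \<le> length u \<and> DeltaSet J u ! (i - 1) < 0} = odd_positions J"
  proof (rule set_eqI)
    fix p
    show "p \<in> {i. 1 \<le> i \<and> i \<le> length u \<and> DeltaSet J u ! (i - 1) < 0} \<longleftrightarrow>
      p \<in> odd_positions J"
    proof (cases "1 \<le> p \<and> p \<le> length u")
      case True
      then obtain k where k: "p = Suc k" "k < length u" by (cases p) auto
      moreover have "0 < u ! k" using pos k(2) by simp
      ultimately show ?thesis
        by (simp add: odd_positions_def nth_DeltaSet[OF fJ k(2)])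
    next
      case False
      then show ?thesis using above_beyond[OF J, of p] by (auto simp: odd_positions_def)
    qed
  qed
  then show ?thesis unfolding negs_def length_DeltaSet by simp
qed

text \<open>The first letter is touched by every \<open>\<Delta>\<^sub>j\<close>, so it is negative iff \<open>|J|\<close> is odd.\<close>
lemma first_letter_DeltaSet:
  assumes pos: "\<forall>x\<in>set u. 0 < x" and J: "J \<subseteq> {1..length u}"
  shows "(DeltaSet J u \<noteq> [] \<and> hd (DeltaSet J u) < 0) \<longleftrightarrow> odd (card J)"
proof (cases "u = []")
  case True
  then show ?thesis using J by (simp add: DeltaSet_def)
next
  case False
  have fJ: "finite J" using J finite_subset by blast
  have ne: "DeltaSet J u \<noteq> []"
    using False length_DeltaSet[of J u] by (auto simp del: length_DeltaSet)
  then have "hd (DeltaSet J u) = DeltaSet J u ! 0" by (rule hd_conv_nth)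
  also have "\<dots> = (if odd (above J 1) then - (u ! 0) else u ! 0)"
    using nth_DeltaSet[OF fJ, of 0 u] False by simp
  also have "above J 1 = card J"
    unfolding above_def using J by (intro arg_cong[where f = card]) auto
  finally have "hd (DeltaSet J u) = (if odd (card J) then - (u ! 0) else u ! 0)" .
  moreover have "0 < u ! 0" using pos False by simp
  ultimately show ?thesis using ne by simp
qed

section \<open>Flag statistics of \<open>\<Delta>\<^sub>J u\<close>\<close>

lemma sum_symdiff:
  fixes f :: "'b \<Rightarrow> nat"
  assumes "finite A" "finite B"
  shows "sum f ((A \<union> B) - (A \<inter> B)) + 2 * sum f (A \<inter> B) = sum f A + sum f B"
proof -
  have "(A \<union> B) - (A \<inter> B) = (A - B) \<union> (B - A)" by auto
  then have "sum f ((A \<union> B) - (A \<inter> B)) = sum f (A - B) + sum f (B - A)"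
    using assms by (simp add: sum.union_disjoint Diff_Int_distrib2 inf_commute)
  moreover have "sum f A = sum f (A \<inter> B) + sum f (A - B)"
    and "sum f B = sum f (A \<inter> B) + sum f (B - A)"
    using assms by (metis sum.Int_Diff, metis sum.Int_Diff inf_commute)
  ultimately show ?thesis by simp
qed

lemma finite_Des: "finite (Des w)"
  unfolding Des_def by (rule finite_subset[of _ "{..<length w}"]) auto

lemma Des_minus_disjoint_even_marks: "(Des u - J) \<inter> even_marks J = {}"
  unfolding even_marks_def by auto

text \<open>Flag descent number: \<open>2 |Des u - J| + 2 (|J| div 2) + (|J| mod 2)\<close>, which equals
  \<open>des u + |J \<triangle> Des u|\<close>.\<close>
lemma fdes_DeltaSet:
  assumes pos: "\<forall>x\<in>set u. 0 < x" and J: "J \<subseteq> {1..length u}"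
  shows "fdes (DeltaSet J u) = des u + card ((J \<union> Des u) - (J \<inter> Des u))"
proof -
  have fJ: "finite J" using J finite_subset by blast
  have "des (DeltaSet J u) = card (Des u - J) + card J div 2"
    unfolding des_def Des_DeltaSet[OF pos J]
    using Des_minus_disjoint_even_marks[of u J]
    by (simp add: card_Un_disjoint finite_Des fJ finite_even_marks card_even_marks)
  moreover have "card (Des u) = card (Des u \<inter> J) + card (Des u - J)"
    by (metis card_Int_Diff finite_Des inf_commute)
  moreover note sum_symdiff[OF fJ finite_Des[of u], of "\<lambda>_. 1"]
  ultimately show ?thesis using first_letter_DeltaSet[OF pos J]
    by (simp add: fdes_def des_def Int_commute)
qed

text \<open>Flag major index: \<open>2 \<Sum>(Des u - J) + 2 \<Sum>(even_marks J) + |odd_positions J|\<close>, which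
  by \<open>sum_even_marks\<close> equals \<open>maj u + \<Sum>(J \<triangle> Des u)\<close>.\<close>
lemma fmaj_DeltaSet:
  assumes pos: "\<forall>x\<in>set u. 0 < x" and J: "J \<subseteq> {1..length u}"
  shows "fmaj (DeltaSet J u) = maj u + \<Sum>((J \<union> Des u) - (J \<inter> Des u))"
proof -
  have fJ: "finite J" using J finite_subset by blast
  have "maj (DeltaSet J u) = \<Sum>(Des u - J) + \<Sum>(even_marks J)"
    unfolding maj_def Des_DeltaSet[OF pos J]
    using Des_minus_disjoint_even_marks[of u J]
    by (simp add: sum.union_disjoint finite_Des fJ finite_even_marks)
  moreover have "\<Sum>(Des u) = \<Sum>(Des u \<inter> J) + \<Sum>(Des u - J)"
    by (metis sum.Int_Diff finite_Des)
  moreover note sum_symdiff[OF fJ finite_Des[of u], of "\<lambda>j. j"] sum_even_marks[OF fJ]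
  ultimately show ?thesis using negs_DeltaSet[OF pos J]
    by (simp add: fmaj_def maj_def Int_commute)
qed

theorem lemma9:
  fixes n :: nat and u :: "int list" and J :: "nat set" and t q :: "'a::comm_ring_1"
  assumes "u \<in> perms n" and "J \<subseteq> {1..n}"
  shows "wt t q (DeltaSet J u) =
    t ^ des u * q ^ maj u * (\<Prod>j\<in>(J \<union> Des u) - (J \<inter> Des u). t * q ^ j)"
proof -
  define S where "S = (J \<union> Des u) - (J \<inter> Des u)"
  have pos: "\<forall>x\<in>set u. 0 < x" and J: "J \<subseteq> {1..length u}"
    using perms_positive[OF assms(1)] assms(2) by auto
  have "(\<Prod>j\<in>S. t * q ^ j) = t ^ card S * q ^ \<Sum>S"
    by (simp add: prod.distrib power_sum)
  then show ?thesis
    unfolding wt_def fdes_DeltaSet[OF pos J] fmaj_DeltaSet[OF pos J] S_def[symmetric]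
    by (simp add: power_add ac_simps)
qed

end
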